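(* Let $P$ be a finite self-dual poset and let $\kappa:P\to P$ be an order-reversing bijection which is an involution. For $I\in\mathcal J(P)$ let $I'$ be the order ideal generated by the antichain $\kappa(\max(I))$. Then for all $I\in\mathcal J(P)$, $\rho^{-1}(I')=(\rho(I))'$.
   Context: $\mathcal J(P)$ is the set of order ideals of $P$. Rowmotion $\rho:\mathcal J(P)\to\mathcal J(P)$ sends $I$ to the order ideal generated by $\min(P\setminus I)$; it is a bijection. An order-reversing bijection $\kappa$ satisfies $x\le y\iff\kappa(x)\ge\kappa(y)$. *)

theory Defs
  imports Main
begin

definition order_ideals :: "'a::order set \<Rightarrow> 'a set set" where
  "order_ideals P = {I. I \<subseteq> P \<and> (\<forall>x\<in>I. \<forall>y\<in>P. y \<le> x \<longrightarrow> y \<in> I)}"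

definition minimals :: "'a::order set \<Rightarrow> 'a set" where
  "minimals A = {x\<in>A. \<not> (\<exists>y\<in>A. y < x)}"

definition maximals :: "'a::order set \<Rightarrow> 'a set" where
  "maximals A = {x\<in>A. \<not> (\<exists>y\<in>A. x < y)}"

definition ideal_gen :: "'a::order set \<Rightarrow> 'a set \<Rightarrow> 'a set" where
  "ideal_gen P A = {x\<in>P. \<exists>a\<in>A. x \<le> a}"

definition rowmotion :: "'a::order set \<Rightarrow> 'a set \<Rightarrow> 'a set" where
  "rowmotion P I = ideal_gen P (minimals (P - I))"

definition order_reversing_bij :: "'a::order set \<Rightarrow> ('a \<Rightarrow> 'a) \<Rightarrow> bool" where
  "order_reversing_bij P k \<longleftrightarrow> bij_betw k P P \<and>
     (\<forall>x\<in>P. \<forall>y\<in>P. x \<le> y \<longleftrightarrow> k x \<ge> k y)"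

definition self_dual :: "'a::order set \<Rightarrow> bool" where
  "self_dual P \<longleftrightarrow> (\<exists>k. order_reversing_bij P k)"

definition prime_ideal_op :: "'a::order set \<Rightarrow> ('a \<Rightarrow> 'a) \<Rightarrow> 'a set \<Rightarrow> 'a set" where
  "prime_ideal_op P k I = ideal_gen P (k ` maximals I)"

end

theory Submission
  imports Defs
begin

text \<open>
  Rowmotion sends I to the ideal generated by the minimal elements of its complement, so
  \<open>max (\<rho> I) = min (P - I)\<close>. Since \<open>\<kappa>\<close> reverses the order, \<open>\<kappa> (min (P - I)) = max (\<kappa> (P - I))\<close>,
  and \<open>\<kappa> (P - I)\<close> is itself an order ideal; hence \<open>(\<rho> I)' = \<kappa> (P - I)\<close>. Its complement is
  \<open>\<kappa> I\<close>, whose minimal elements are \<open>\<kappa> (max I)\<close>, so \<open>\<rho> (\<kappa> (P - I)) = I'\<close>. As \<open>\<rho>\<close> is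
  injective, this means \<open>\<rho>\<^sup>-\<^sup>1 (I') = (\<rho> I)'\<close>.
\<close>

lemma ideal_gen_in_order_ideals: "ideal_gen P A \<in> order_ideals P"
  unfolding ideal_gen_def order_ideals_def by (auto intro: order_trans)

lemma maximals_minimals: "maximals (minimals A) = minimals A"
  unfolding maximals_def minimals_def by auto

lemma maximals_ideal_gen:
  assumes "A \<subseteq> P"
  shows "maximals (ideal_gen P A) = maximals A"
  using assms unfolding maximals_def ideal_gen_def
  by (auto 4 3 simp: less_le intro: order_trans dest: order_trans)

lemma maximals_rowmotion: "maximals (rowmotion P I) = minimals (P - I)"
proof -
  have "minimals (P - I) \<subseteq> P" by (auto simp: minimals_def)
  then show ?thesis
    unfolding rowmotion_def by (simp add: maximals_ideal_gen maximals_minimals)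
qed

lemma ideal_gen_maximals:
  assumes "finite B" and "B \<in> order_ideals P"
  shows "ideal_gen P (maximals B) = B"
proof
  show "ideal_gen P (maximals B) \<subseteq> B"
    using assms(2) unfolding ideal_gen_def maximals_def order_ideals_def by auto
  show "B \<subseteq> ideal_gen P (maximals B)"
  proof
    fix x assume "x \<in> B"
    then obtain m where "m \<in> B" "x \<le> m" "\<forall>b\<in>B. m \<le> b \<longrightarrow> m = b"
      using finite_has_maximal2[OF assms(1)] by blast
    then have "m \<in> maximals B" unfolding maximals_def by (auto simp: less_le)
    with \<open>x \<in> B\<close> \<open>x \<le> m\<close> assms(2) show "x \<in> ideal_gen P (maximals B)"
      unfolding ideal_gen_def order_ideals_def by auto
  qed
qed

lemma complement_eq_upset_minimals:
  assumes "finite (P - I)" and "I \<in> order_ideals P"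
  shows "P - I = {x\<in>P. \<exists>m\<in>minimals (P - I). m \<le> x}"
proof
  show "P - I \<subseteq> {x\<in>P. \<exists>m\<in>minimals (P - I). m \<le> x}"
  proof
    fix x assume "x \<in> P - I"
    then obtain m where "m \<in> P - I" "m \<le> x" and "\<forall>b\<in>P - I. b \<le> m \<longrightarrow> m = b"
      using finite_has_minimal2[OF assms(1)] by blast
    then have "m \<in> minimals (P - I)" unfolding minimals_def by (auto simp: less_le)
    with \<open>x \<in> P - I\<close> \<open>m \<le> x\<close> show "x \<in> {x\<in>P. \<exists>m\<in>minimals (P - I). m \<le> x}" by auto
  qed
  show "{x\<in>P. \<exists>m\<in>minimals (P - I). m \<le> x} \<subseteq> P - I"
    using assms(2) unfolding minimals_def order_ideals_def by auto
qed

lemma inj_on_rowmotion: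
  assumes "finite P"
  shows "inj_on (rowmotion P) (order_ideals P)"
proof (rule inj_onI)
  fix I J assume I: "I \<in> order_ideals P" and J: "J \<in> order_ideals P"
    and "rowmotion P I = rowmotion P J"
  then have "minimals (P - I) = minimals (P - J)" by (metis maximals_rowmotion)
  then have "P - I = P - J"
    using complement_eq_upset_minimals[OF finite_Diff[OF assms] I]
      complement_eq_upset_minimals[OF finite_Diff[OF assms] J]
    by simp
  moreover have "I \<subseteq> P" "J \<subseteq> P" using I J unfolding order_ideals_def by auto
  ultimately show "I = J" by blast
qed

lemma order_reversing_bij_less_iff:
  assumes "order_reversing_bij P k" and "x \<in> P" and "y \<in> P"
  shows "k x < k y \<longleftrightarrow> y < x"
proof -
  have "inj_on k P" using assms(1) unfolding order_reversing_bij_def bij_betw_def by auto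
  then have "k x = k y \<longleftrightarrow> x = y" using assms(2,3) by (metis inj_on_eq_iff)
  moreover have "x \<le> y \<longleftrightarrow> k y \<le> k x" "y \<le> x \<longleftrightarrow> k x \<le> k y"
    using assms unfolding order_reversing_bij_def by auto
  ultimately show ?thesis by (auto simp: less_le)
qed

lemma order_reversing_image_maximals:
  assumes "order_reversing_bij P k" and "A \<subseteq> P"
  shows "k ` maximals A = minimals (k ` A)"
proof -
  have "(\<exists>y\<in>A. x < y) \<longleftrightarrow> (\<exists>y\<in>A. k y < k x)" if "x \<in> A" for x
    using that assms(2) order_reversing_bij_less_iff[OF assms(1)] by blast
  then show ?thesis unfolding maximals_def minimals_def by blast
qed

lemma order_reversing_image_minimals:
  assumes "order_reversing_bij P k" and "A \<subseteq> P"
  shows "k ` minimals A = maximals (k ` A)"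
proof -
  have "(\<exists>y\<in>A. y < x) \<longleftrightarrow> (\<exists>y\<in>A. k x < k y)" if "x \<in> A" for x
    using that assms(2) order_reversing_bij_less_iff[OF assms(1)] by blast
  then show ?thesis unfolding maximals_def minimals_def by blast
qed

lemma order_reversing_image_complement_ideal:
  assumes "order_reversing_bij P k" and "I \<in> order_ideals P"
  shows "k ` (P - I) \<in> order_ideals P"
  unfolding order_ideals_def
proof (intro CollectI conjI ballI impI)
  have "k ` P = P" and k_le: "\<forall>x\<in>P. \<forall>y\<in>P. x \<le> y \<longleftrightarrow> k y \<le> k x"
    using assms(1) unfolding order_reversing_bij_def bij_betw_def by auto
  then show "k ` (P - I) \<subseteq> P" by auto
  fix x y assume "x \<in> k ` (P - I)" and "y \<in> P" and "y \<le> x"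
  then obtain u v where "u \<in> P - I" "x = k u" "v \<in> P" "y = k v"
    using \<open>k ` P = P\<close> by (metis image_iff)
  with \<open>y \<le> x\<close> k_le have "u \<le> v" by auto
  with \<open>u \<in> P - I\<close> \<open>v \<in> P\<close> assms(2) have "v \<notin> I" unfolding order_ideals_def by auto
  with \<open>v \<in> P\<close> \<open>y = k v\<close> show "y \<in> k ` (P - I)" by auto
qed

lemma bij_betw_complement_image_complement:
  assumes "bij_betw k P P" and "I \<subseteq> P"
  shows "P - k ` (P - I) = k ` I"
proof -
  have "k ` (P - I) = k ` P - k ` I"
    using assms by (meson bij_betw_imp_inj_on inj_on_image_set_diff Diff_subset)
  with assms show ?thesis by (auto simp: bij_betw_imp_surj_on bij_betw_apply)
qed

lemma prime_ideal_op_rowmotion: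
  assumes "finite P" and "order_reversing_bij P k" and "I \<in> order_ideals P"
  shows "prime_ideal_op P k (rowmotion P I) = k ` (P - I)"
proof -
  have "prime_ideal_op P k (rowmotion P I) = ideal_gen P (k ` minimals (P - I))"
    unfolding prime_ideal_op_def maximals_rowmotion ..
  also have "\<dots> = ideal_gen P (maximals (k ` (P - I)))"
    using order_reversing_image_minimals[OF assms(2)] by auto
  also have "\<dots> = k ` (P - I)"
    using assms(1)
    by (intro ideal_gen_maximals order_reversing_image_complement_ideal[OF assms(2,3)]) simp
  finally show ?thesis .
qed

lemma rowmotion_image_complement:
  assumes "order_reversing_bij P k" and "I \<subseteq> P"
  shows "rowmotion P (k ` (P - I)) = prime_ideal_op P k I"
proof -
  have "bij_betw k P P" using assms(1) unfolding order_reversing_bij_def by auto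
  have "rowmotion P (k ` (P - I)) = ideal_gen P (minimals (P - k ` (P - I)))"
    unfolding rowmotion_def ..
  also have "\<dots> = ideal_gen P (minimals (k ` I))"
    using bij_betw_complement_image_complement[OF \<open>bij_betw k P P\<close> assms(2)] by simp
  also have "\<dots> = prime_ideal_op P k I"
    unfolding prime_ideal_op_def order_reversing_image_maximals[OF assms] ..
  finally show ?thesis .
qed

theorem lemma5p13:
  fixes P :: "'a::order set" and \<kappa> :: "'a \<Rightarrow> 'a"
  assumes "finite P"
    and "self_dual P"
    and "order_reversing_bij P \<kappa>"
    and "\<forall>x\<in>P. \<kappa> (\<kappa> x) = x"
    and "I \<in> order_ideals P"
  shows "the_inv_into (order_ideals P) (rowmotion P) (prime_ideal_op P \<kappa> I)
         = prime_ideal_op P \<kappa> (rowmotion P I)"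
proof (rule the_inv_into_f_eq[OF inj_on_rowmotion[OF assms(1)]])
  have "I \<subseteq> P" using assms(5) unfolding order_ideals_def by auto
  then show "rowmotion P (prime_ideal_op P \<kappa> (rowmotion P I)) = prime_ideal_op P \<kappa> I"
    by (simp add: prime_ideal_op_rowmotion[OF assms(1,3,5)]
        rowmotion_image_complement[OF assms(3)])
  show "prime_ideal_op P \<kappa> (rowmotion P I) \<in> order_ideals P"
    unfolding prime_ideal_op_def by (rule ideal_gen_in_order_ideals)
qed

end
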